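(* Consider the SRLOD model on a finite connected graph $G$ with $N\ge2$ agents, learning rate $\alpha\in(0,1)$ and exploration rate $\epsilon\in(0,1)$. For every time $t_0$, every configuration of Q-values in $[-1,1]$ at time $t_0$ with preference vector $y_{t_0}=\eta$, and every $\zeta\in\mathcal{S}=\{-1,1\}^N$, there exists $k<\infty$ such that $$\mathbb{P}(y_{t_0+k}=\zeta\mid \text{Q-values at time } t_0)>0.$$ In particular all states of $\mathcal{S}$ communicate for the preference-vector process.
   Context: The SRLOD (symmetric reinforcement learning for opinion dynamics) model: $G=(V,E)$ is a finite simple undirected graph with $V=\{1,\dots,N\}$. Each agent $i$ holds Q-values $q^i_1(t),q^i_{-1}(t)$, initialized in $[-1,1]$. The preference vector $y_t\in\{-1,1\}^N$ has $y_t(i)=1$ if $q^i_1(t)\ge q^i_{-1}(t)$ and $y_t(i)=-1$ otherwise; $y_t(i)$ is agent $i$'s preferred opinion. In each discrete round $t$, an edge $(i,j)\in E$ is chosen uniformly at random; independently, each of $i$ and $j$ expresses an opinion $o_i(t),o_j(t)\in\{-1,1\}$, equal to its preferred opinion with probability $1-\epsilon$ and the other opinion with probability $\epsilon$; then both update only the Q-value of the opinion they expressed: $q^i_{o_i(t)}(t+1)=(1-\alpha)q^i_{o_i(t)}(t)+\alpha\,o_i(t)o_j(t)$ and $q^j_{o_j(t)}(t+1)=(1-\alpha)q^j_{o_j(t)}(t)+\alpha\,o_i(t)o_j(t)$. All other Q-values are unchanged. *)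

theory Defs
  imports "HOL-Probability.Probability"
begin

text \<open>Agents are 1..N. A Q-value configuration is a function
  Q :: nat \<Rightarrow> int \<Rightarrow> real, where Q i 1 and Q i (-1) are agent i's Q-values.\<close>

definition simple_graph :: "nat \<Rightarrow> (nat \<times> nat) set \<Rightarrow> bool" where
  "simple_graph N E \<longleftrightarrow> E \<subseteq> {1..N} \<times> {1..N} \<and> sym E \<and> irrefl E"

definition connected_graph :: "nat \<Rightarrow> (nat \<times> nat) set \<Rightarrow> bool" where
  "connected_graph N E \<longleftrightarrow> (\<forall>i\<in>{1..N}. \<forall>j\<in>{1..N}. (i, j) \<in> E\<^sup>*)"

definition edges :: "(nat \<times> nat) set \<Rightarrow> (nat \<times> nat) set" where
  "edges E = {(i, j). (i, j) \<in> E \<and> i < j}"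

definition pref :: "(nat \<Rightarrow> int \<Rightarrow> real) \<Rightarrow> nat \<Rightarrow> int" where
  "pref Q i = (if Q i 1 \<ge> Q i (-1) then 1 else -1)"

definition express :: "real \<Rightarrow> int \<Rightarrow> int pmf" where
  "express eps y = map_pmf (\<lambda>b. if b then - y else y) (bernoulli_pmf eps)"

definition update :: "real \<Rightarrow> (nat \<Rightarrow> int \<Rightarrow> real) \<Rightarrow> nat \<Rightarrow> nat \<Rightarrow> int \<Rightarrow> int
    \<Rightarrow> (nat \<Rightarrow> int \<Rightarrow> real)" where
  "update \<alpha> Q i j oi oj =
     (let r = real_of_int (oi * oj);
          Q1 = Q(i := (Q i)(oi := (1 - \<alpha>) * Q i oi + \<alpha> * r))
      in Q1(j := (Q1 j)(oj := (1 - \<alpha>) * Q j oj + \<alpha> * r)))"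

definition srlod_step :: "real \<Rightarrow> real \<Rightarrow> (nat \<times> nat) set \<Rightarrow> (nat \<Rightarrow> int \<Rightarrow> real)
    \<Rightarrow> (nat \<Rightarrow> int \<Rightarrow> real) pmf" where
  "srlod_step \<alpha> eps E Q =
     bind_pmf (pmf_of_set (edges E)) (\<lambda>(i, j).
     bind_pmf (express eps (pref Q i)) (\<lambda>oi.
     bind_pmf (express eps (pref Q j)) (\<lambda>oj.
     return_pmf (update \<alpha> Q i j oi oj))))"

text \<open>Distribution of the Q-configuration k rounds after configuration Q
  (the chain is time-homogeneous).\<close>
definition srlod_run :: "real \<Rightarrow> real \<Rightarrow> (nat \<times> nat) set \<Rightarrow> nat \<Rightarrow> (nat \<Rightarrow> int \<Rightarrow> real)
    \<Rightarrow> (nat \<Rightarrow> int \<Rightarrow> real) pmf" where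
  "srlod_run \<alpha> eps E k Q = ((\<lambda>p. bind_pmf p (srlod_step \<alpha> eps E)) ^^ k) (return_pmf Q)"

end

theory Submission
  imports Defs
begin

text \<open>Any configuration of preferences can be reached with positive probability because
  every round may pick any edge and any pair of expressed opinions. Fixing an edge (i, j) and
  the opinions (a, b) and repeating that round drives Q i a and Q j b geometrically towards a b,
  leaving all other Q-values untouched. Call an entry Q k c good if its sign agrees with c \<zeta> k;
  an agent with both entries good prefers \<zeta> k. For an agent i with neighbour j, letting j
  express \<zeta> i while i first expresses -\<zeta> j and then \<zeta> j makes both entries of i good,
  and the second phase also repairs the one entry of j that the first phase may have spoiled.
  Treating the agents one after the other, every entry made good stays good.\<close>

abbreviation srlod_reach :: "real \<Rightarrow> real \<Rightarrow> (nat \<times> nat) set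
    \<Rightarrow> (nat \<Rightarrow> int \<Rightarrow> real) \<Rightarrow> (nat \<Rightarrow> int \<Rightarrow> real) \<Rightarrow> bool" where
  "srlod_reach \<alpha> eps E \<equiv> (\<lambda>Q Q'. Q' \<in> set_pmf (srlod_step \<alpha> eps E Q))\<^sup>*\<^sup>*"

lemma srlod_reach_imp_in_run:
  assumes "srlod_reach \<alpha> eps E Q Q'"
  shows "\<exists>k. Q' \<in> set_pmf (srlod_run \<alpha> eps E k Q)"
  using assms
proof (induction rule: rtranclp_induct)
  case base
  have "Q \<in> set_pmf (srlod_run \<alpha> eps E 0 Q)" by (simp add: srlod_run_def)
  then show ?case ..
next
  case (step Q' Q'')
  then obtain k where "Q' \<in> set_pmf (srlod_run \<alpha> eps E k Q)" by blast
  with step.hyps(2) have "Q'' \<in> set_pmf (srlod_run \<alpha> eps E (Suc k) Q)"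
    by (auto simp: srlod_run_def)
  then show ?case ..
qed

lemma set_pmf_express:
  assumes "0 < eps" "eps < 1"
  shows "set_pmf (express eps y) = {y, -y}"
  using assms by (auto simp: express_def)

lemma finite_edges:
  assumes "simple_graph N E"
  shows "finite (edges E)"
proof (rule finite_subset)
  show "edges E \<subseteq> {1..N} \<times> {1..N}"
    using assms by (auto simp: edges_def simple_graph_def)
qed simp

lemma update_commute:
  assumes "i \<noteq> j"
  shows "update \<alpha> Q j i b a = update \<alpha> Q i j a b"
  using assms by (auto simp: update_def Let_def fun_eq_iff mult.commute)

lemma update_in_srlod_step:
  assumes "simple_graph N E" "0 < eps" "eps < 1" "(i, j) \<in> E"
    and "a \<in> {-1, 1}" "b \<in> {-1, 1}"
  shows "update \<alpha> Q i j a b \<in> set_pmf (srlod_step \<alpha> eps E Q)"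
proof -
  have ij: "i \<noteq> j"
    using assms(1,4) by (auto simp: simple_graph_def irrefl_def)
  have opinions: "c \<in> set_pmf (express eps (pref Q k))" if "c \<in> {-1, 1}" for c k
    using that assms(2,3) by (auto simp: set_pmf_express pref_def)
  have in_step: "update \<alpha> Q i' j' a' b' \<in> set_pmf (srlod_step \<alpha> eps E Q)"
    if "(i', j') \<in> edges E" "a' \<in> {-1, 1}" "b' \<in> {-1, 1}" for i' j' a' b'
  proof -
    have "update \<alpha> Q i' j' a' b' \<in> set_pmf (express eps (pref Q i') \<bind> (\<lambda>oi.
        express eps (pref Q j') \<bind> (\<lambda>oj. return_pmf (update \<alpha> Q i' j' oi oj))))"
      using opinions[OF that(2)] opinions[OF that(3)] by auto
    moreover have "edges E \<noteq> {}"
      using that(1) by blast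
    then have "set_pmf (pmf_of_set (edges E)) = edges E"
      using finite_edges[OF assms(1)] by (rule set_pmf_of_set)
    ultimately show ?thesis
      unfolding srlod_step_def set_bind_pmf using that(1) by (intro UN_I[of "(i', j')"]) simp_all
  qed
  show ?thesis
  proof (cases "i < j")
    case True
    with assms(4-6) in_step show ?thesis by (simp add: edges_def)
  next
    case False
    with ij have "(j, i) \<in> edges E"
      using assms(1,4) by (auto simp: edges_def simple_graph_def sym_def)
    from in_step[OF this assms(6,5)] show ?thesis
      by (simp add: update_commute[OF ij])
  qed
qed

lemma funpow_update:
  assumes "i \<noteq> j"
  shows "((\<lambda>Q. update \<alpha> Q i j a b) ^^ n) Q =
    (\<lambda>k c. if (k, c) = (i, a) \<or> (k, c) = (j, b)
           then of_int (a * b) + (1 - \<alpha>) ^ n * (Q k c - of_int (a * b)) else Q k c)"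
proof (induction n)
  case (Suc n)
  then show ?case
    using assms by (simp add: update_def Let_def fun_eq_iff algebra_simps)
qed (simp add: fun_eq_iff)

lemma srlod_reach_funpow_update:
  assumes "simple_graph N E" "0 < eps" "eps < 1" "(i, j) \<in> E"
    and "a \<in> {-1, 1}" "b \<in> {-1, 1}"
  shows "srlod_reach \<alpha> eps E Q (((\<lambda>Q. update \<alpha> Q i j a b) ^^ n) Q)"
proof (induction n)
  case (Suc n)
  with update_in_srlod_step[OF assms] show ?case
    by (simp add: rtranclp.rtrancl_into_rtrancl)
qed simp

lemma eventually_relaxation_sign:
  fixes \<alpha> r s x :: real
  assumes "0 < \<alpha>" "\<alpha> < 1" "s * r > 0"
  shows "\<forall>\<^sub>F n in sequentially. s * (r + (1 - \<alpha>) ^ n * (x - r)) > 0"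
proof -
  have "(\<lambda>n. (1 - \<alpha>) ^ n) \<longlonglongrightarrow> 0"
    by (rule LIMSEQ_power_zero) (use assms in simp)
  then have "(\<lambda>n. s * (r + (1 - \<alpha>) ^ n * (x - r))) \<longlonglongrightarrow> s * (r + 0 * (x - r))"
    by (intro tendsto_mult tendsto_add tendsto_const)
  with assms(3) show ?thesis by (auto dest: order_tendstoD)
qed

definition good :: "(nat \<Rightarrow> int) \<Rightarrow> (nat \<Rightarrow> int \<Rightarrow> real) \<Rightarrow> nat \<Rightarrow> int \<Rightarrow> bool" where
  "good \<zeta> Q k c \<longleftrightarrow> of_int (c * \<zeta> k) * Q k c > 0"

lemma pref_eq_if_good:
  assumes "good \<zeta> Q k 1" "good \<zeta> Q k (-1)" "\<zeta> k \<in> {-1, 1}"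
  shows "pref Q k = \<zeta> k"
  using assms by (auto simp: good_def pref_def zero_less_mult_iff)

lemma eventually_good_funpow_update:
  assumes "i \<noteq> j" "0 < \<alpha>" "\<alpha> < 1" "a \<in> {-1, 1}" "b \<in> {-1, 1}" "\<zeta> i \<in> {-1, 1}"
  shows "\<forall>\<^sub>F n in sequentially.
    b = \<zeta> i \<longrightarrow> good \<zeta> (((\<lambda>Q. update \<alpha> Q i j a b) ^^ n) Q) i a"
proof (cases "b = \<zeta> i")
  case True
  then have "a * \<zeta> i * (a * b) = 1"
    using assms(4,6) by auto
  then have "of_int (a * \<zeta> i) * of_int (a * b) > (0::real)"
    by (simp flip: of_int_mult)
  from eventually_relaxation_sign[OF assms(2,3) this, of "Q i a"]
  have "\<forall>\<^sub>F n in sequentially. good \<zeta> (((\<lambda>Q. update \<alpha> Q i j a b) ^^ n) Q) i a"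
    by (simp add: good_def funpow_update[OF assms(1)])
  then show ?thesis
    by (rule eventually_mono) blast
qed simp

lemma srlod_reach_good_entries:
  assumes "simple_graph N E" "0 < eps" "eps < 1" "0 < \<alpha>" "\<alpha> < 1" "(i, j) \<in> E"
    and "a \<in> {-1, 1}" "b \<in> {-1, 1}" "\<zeta> i \<in> {-1, 1}" "\<zeta> j \<in> {-1, 1}"
  obtains Q' where "srlod_reach \<alpha> eps E Q Q'"
    and "b = \<zeta> i \<Longrightarrow> good \<zeta> Q' i a" and "a = \<zeta> j \<Longrightarrow> good \<zeta> Q' j b"
    and "\<And>k c. (k, c) \<noteq> (i, a) \<Longrightarrow> (k, c) \<noteq> (j, b) \<Longrightarrow> Q' k c = Q k c"
proof -
  have ij: "i \<noteq> j"
    using assms(1,6) by (auto simp: simple_graph_def irrefl_def)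
  let ?Q = "\<lambda>n. ((\<lambda>Q. update \<alpha> Q i j a b) ^^ n) Q"
  have "\<forall>\<^sub>F n in sequentially. b = \<zeta> i \<longrightarrow> good \<zeta> (?Q n) i a"
    using eventually_good_funpow_update[where \<zeta> = \<zeta>, OF ij assms(4,5,7,8,9)] .
  moreover have "\<forall>\<^sub>F n in sequentially. a = \<zeta> j \<longrightarrow> good \<zeta> (?Q n) j b"
    using eventually_good_funpow_update[where \<zeta> = \<zeta> and Q = Q,
        OF ij[symmetric] assms(4,5,8,7,10)]
    by (simp add: update_commute[OF ij])
  ultimately obtain n where "b = \<zeta> i \<longrightarrow> good \<zeta> (?Q n) i a" "a = \<zeta> j \<longrightarrow> good \<zeta> (?Q n) j b"
    unfolding eventually_sequentially by (meson le_cases)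
  moreover have "srlod_reach \<alpha> eps E Q (?Q n)"
    using srlod_reach_funpow_update[OF assms(1-3,6-8)] .
  moreover have "?Q n k c = Q k c" if "(k, c) \<noteq> (i, a)" "(k, c) \<noteq> (j, b)" for k c
    using that by (auto simp: funpow_update[OF ij])
  ultimately show ?thesis using that by blast
qed

lemma srlod_reach_good_agent:
  assumes "simple_graph N E" "0 < eps" "eps < 1" "0 < \<alpha>" "\<alpha> < 1" "(i, j) \<in> E"
    and "\<zeta> i \<in> {-1, 1}" "\<zeta> j \<in> {-1, 1}"
  obtains Q' where "srlod_reach \<alpha> eps E Q Q'" and "good \<zeta> Q' i 1" "good \<zeta> Q' i (-1)"
    and "\<And>k c. good \<zeta> Q k c \<Longrightarrow> good \<zeta> Q' k c"
proof -
  have ij: "i \<noteq> j"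
    using assms(1,6) by (auto simp: simple_graph_def irrefl_def)
  have opp: "- \<zeta> j \<in> {-1, 1}"
    using assms(8) by auto
  obtain Q1 where reach1: "srlod_reach \<alpha> eps E Q Q1" and good1: "good \<zeta> Q1 i (- \<zeta> j)"
    and frozen1: "\<And>k c. (k, c) \<noteq> (i, - \<zeta> j) \<Longrightarrow> (k, c) \<noteq> (j, \<zeta> i) \<Longrightarrow> Q1 k c = Q k c"
    using srlod_reach_good_entries[where \<zeta> = \<zeta> and Q = Q, OF assms(1-6) opp assms(7,7,8)]
    by metis
  obtain Q2 where reach2: "srlod_reach \<alpha> eps E Q1 Q2"
    and good2: "good \<zeta> Q2 i (\<zeta> j)" "good \<zeta> Q2 j (\<zeta> i)"
    and frozen2: "\<And>k c. (k, c) \<noteq> (i, \<zeta> j) \<Longrightarrow> (k, c) \<noteq> (j, \<zeta> i) \<Longrightarrow> Q2 k c = Q1 k c"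
    using srlod_reach_good_entries[where \<zeta> = \<zeta> and Q = Q1, OF assms(1-6,8,7,7,8)] by metis
  have "Q2 i (- \<zeta> j) = Q1 i (- \<zeta> j)"
    using frozen2 ij assms(8) by auto
  with good1 have "good \<zeta> Q2 i (- \<zeta> j)"
    by (simp add: good_def)
  with good2(1) have "good \<zeta> Q2 i c" if "c \<in> {-1, 1}" for c
    using that assms(8) by auto
  moreover have "good \<zeta> Q2 k c" if "good \<zeta> Q k c" for k c
  proof (cases "(k, c) \<in> {(i, - \<zeta> j), (i, \<zeta> j), (j, \<zeta> i)}")
    case True
    with good2 \<open>good \<zeta> Q2 i (- \<zeta> j)\<close> show ?thesis by auto
  next
    case False
    with frozen1 frozen2 have "Q2 k c = Q k c" by auto
    with that show ?thesis by (simp add: good_def)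
  qed
  moreover have "srlod_reach \<alpha> eps E Q Q2"
    using reach1 reach2 by (rule rtranclp_trans)
  ultimately show ?thesis using that by simp
qed

lemma connected_graph_obtain_neighbour:
  assumes "N \<ge> 2" "simple_graph N E" "connected_graph N E" "i \<in> {1..N}"
  obtains j where "(i, j) \<in> E" "j \<in> {1..N}"
proof -
  define i' :: nat where "i' = (if i = 1 then 2 else 1)"
  have "i' \<in> {1..N}" "i' \<noteq> i"
    using assms(1) by (auto simp: i'_def)
  moreover have "(i, i') \<in> E\<^sup>*"
    using assms(3,4) \<open>i' \<in> {1..N}\<close> by (auto simp: connected_graph_def)
  ultimately obtain j where "(i, j) \<in> E"
    by (metis converse_rtranclE)
  moreover have "j \<in> {1..N}"
    using assms(2) \<open>(i, j) \<in> E\<close> by (auto simp: simple_graph_def)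
  ultimately show ?thesis using that by blast
qed

lemma srlod_reach_good_agents:
  assumes "N \<ge> 2" "simple_graph N E" "connected_graph N E"
    and "0 < \<alpha>" "\<alpha> < 1" "0 < eps" "eps < 1" "\<forall>i\<in>{1..N}. \<zeta> i \<in> {-1, 1}"
    and "m \<le> N"
  obtains Q' where "srlod_reach \<alpha> eps E Q Q'"
    and "\<And>k. k \<in> {1..m} \<Longrightarrow> good \<zeta> Q' k 1 \<and> good \<zeta> Q' k (-1)"
  using assms(9)
proof (induction m arbitrary: thesis)
  case 0
  then show ?case by auto
next
  case (Suc m)
  obtain Q1 where reach1: "srlod_reach \<alpha> eps E Q Q1"
    and good1: "\<And>k. k \<in> {1..m} \<Longrightarrow> good \<zeta> Q1 k 1 \<and> good \<zeta> Q1 k (-1)"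
    using Suc.IH Suc.prems(2) by (metis Suc_leD)
  have agent: "Suc m \<in> {1..N}"
    using Suc.prems(2) by auto
  then obtain j where "(Suc m, j) \<in> E" "j \<in> {1..N}"
    using connected_graph_obtain_neighbour[OF assms(1-3)] by blast
  moreover have "\<zeta> (Suc m) \<in> {-1, 1}" "\<zeta> j \<in> {-1, 1}"
    using assms(8) agent \<open>j \<in> {1..N}\<close> by auto
  ultimately obtain Q2 where reach2: "srlod_reach \<alpha> eps E Q1 Q2"
    and "good \<zeta> Q2 (Suc m) 1" "good \<zeta> Q2 (Suc m) (-1)"
    and preserved: "\<And>k c. good \<zeta> Q1 k c \<Longrightarrow> good \<zeta> Q2 k c"
    using srlod_reach_good_agent[where Q = Q1, OF assms(2,6,7,4,5)] by metis
  then have "good \<zeta> Q2 k 1 \<and> good \<zeta> Q2 k (-1)" if "k \<in> {1..Suc m}" for k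
    using that good1 preserved by (cases "k = Suc m") auto
  moreover have "srlod_reach \<alpha> eps E Q Q2"
    using reach1 reach2 by (rule rtranclp_trans)
  ultimately show ?case
    using Suc.prems(1) by blast
qed

theorem proposition1:
  fixes N :: nat and E :: "(nat \<times> nat) set" and \<alpha> eps :: real
    and Q :: "nat \<Rightarrow> int \<Rightarrow> real" and \<zeta> :: "nat \<Rightarrow> int"
  assumes "N \<ge> 2"
    and "simple_graph N E" and "connected_graph N E"
    and "0 < \<alpha>" "\<alpha> < 1" and "0 < eps" "eps < 1"
    and "\<forall>i\<in>{1..N}. \<forall>a\<in>{-1, 1}. Q i a \<in> {-1..1}"
    and "\<forall>i\<in>{1..N}. \<zeta> i \<in> {-1, 1}"
  shows "\<exists>k. measure_pmf.prob (srlod_run \<alpha> eps E k Q)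
              {Q'. \<forall>i\<in>{1..N}. pref Q' i = \<zeta> i} > 0"
proof -
  \<comment> \<open>The bound on the initial Q-values is not needed.\<close>
  obtain Q' where "srlod_reach \<alpha> eps E Q Q'"
    and good: "\<And>k. k \<in> {1..N} \<Longrightarrow> good \<zeta> Q' k 1 \<and> good \<zeta> Q' k (-1)"
    using srlod_reach_good_agents[OF assms(1-7,9) order_refl] by blast
  then obtain k where "Q' \<in> set_pmf (srlod_run \<alpha> eps E k Q)"
    using srlod_reach_imp_in_run by blast
  moreover have "\<forall>i\<in>{1..N}. pref Q' i = \<zeta> i"
    using good assms(9) pref_eq_if_good by blast
  ultimately show ?thesis
    by (auto intro!: measure_pmf_posI)
qed

end
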